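(* Let $Y$ be a Banach space with type $\tau\in[1,2)$, and let $\alpha\in[0,\frac12)$ and $q\in(2,\infty)$ satisfy $\frac1q<\frac1\tau-\alpha$. Let $\Phi\in B^{\frac1\tau-\frac12}_{q,\tau}(0,T;Y)\cap L^\infty(0,T;Y)$ and for $t\in[0,T]$ define $\Phi_{\alpha,t}:(0,t)\to Y$ by $\Phi_{\alpha,t}(s)=(t-s)^{-\alpha}\Phi(s)$. Then there exists $\varepsilon_0>0$ such that for all $T_0\in[0,T]$, $$\sup_{0\le t\le T_0}\|\Phi_{\alpha,t}\|_{B^{\frac1\tau-\frac12}_{\tau,\tau}(0,t;Y)}\lesssim T_0^{\varepsilon_0}\|\Phi\|_{L^\infty(0,T_0;Y)\cap B^{\frac1\tau-\frac12}_{q,\tau}(0,T_0;Y)},$$ with implied constant independent of $T_0$.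
   Context: For an interval $I=(a,b)$, $q,r\in[1,\infty]$ and $s\in(0,1)$, $B^s_{q,r}(I;Y)$ is the space of $f\in L^q(I;Y)$ with $\|f\|_{B^s_{q,r}(I;Y)}:=\|f\|_{L^q(I;Y)}+\big(\int_0^1\rho^{-sr}\sup_{|h|<\rho}\|T^I_hf-f\|^r_{L^q(I;Y)}\frac{d\rho}\rho\big)^{1/r}<\infty$, where $T^I_hf(s)=f(s+h)$ if $s+h\in I$ and $0$ otherwise. The norm on an intersection of two spaces is the sum of the norms. *)

theory Defs
  imports "HOL-Analysis.Analysis"
begin

definition enn_powr :: "ennreal \<Rightarrow> real \<Rightarrow> ennreal" where
  "enn_powr x p = (if x = \<infinity> then \<infinity> else ennreal (enn2real x powr p))"

text \<open>Banach space of (Rademacher) type tau, with the Rademacher average written as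
  a finite average over all sign vectors.\<close>
definition rademacher_type :: "'a::real_normed_vector itself \<Rightarrow> real \<Rightarrow> bool" where
  "rademacher_type _ \<tau> \<longleftrightarrow> (\<exists>C. \<forall>(n::nat) (x::nat \<Rightarrow> 'a).
     ((\<Sum>\<epsilon>\<in>({..<n} \<rightarrow>\<^sub>E {-1, 1::real}). norm (\<Sum>i<n. \<epsilon> i *\<^sub>R x i) powr \<tau>) / 2 ^ n) powr (1 / \<tau>)
       \<le> C * (\<Sum>i<n. norm (x i) powr \<tau>) powr (1 / \<tau>))"

definition strongly_measurable_on :: "real set \<Rightarrow> (real \<Rightarrow> 'a::real_normed_vector) \<Rightarrow> bool" where
  "strongly_measurable_on I f \<longleftrightarrow> (\<exists>g :: nat \<Rightarrow> real \<Rightarrow> 'a.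
     (\<forall>n. g n \<in> borel_measurable lebesgue \<and> finite (range (g n))) \<and>
     (AE s in lebesgue. s \<in> I \<longrightarrow> (\<lambda>n. g n s) \<longlonglongrightarrow> f s))"

definition Lq_norm :: "real \<Rightarrow> real set \<Rightarrow> (real \<Rightarrow> 'a::real_normed_vector) \<Rightarrow> ennreal" where
  "Lq_norm q I f = enn_powr (\<integral>\<^sup>+ s\<in>I. ennreal (norm (f s) powr q) \<partial>lebesgue) (1 / q)"

definition Linf_norm :: "real set \<Rightarrow> (real \<Rightarrow> 'a::real_normed_vector) \<Rightarrow> ennreal" where
  "Linf_norm I f = Inf {C. AE s in lebesgue. s \<in> I \<longrightarrow> ennreal (norm (f s)) \<le> C}"

definition transl :: "real set \<Rightarrow> real \<Rightarrow> (real \<Rightarrow> 'a::zero) \<Rightarrow> real \<Rightarrow> 'a" where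
  "transl I h f s = (if s + h \<in> I then f (s + h) else 0)"

definition besov_norm :: "real \<Rightarrow> real \<Rightarrow> real \<Rightarrow> real set \<Rightarrow> (real \<Rightarrow> 'a::real_normed_vector) \<Rightarrow> ennreal" where
  "besov_norm q r sm I f = Lq_norm q I f +
     enn_powr (\<integral>\<^sup>+ \<rho>\<in>{0<..<1}.
        ennreal (\<rho> powr (- sm * r) / \<rho>) *
        enn_powr (SUP h\<in>{h. \<bar>h\<bar> < \<rho>}. Lq_norm q I (\<lambda>s. transl I h f s - f s)) r \<partial>lborel) (1 / r)"

end

theory Submission
  imports Defs
begin

text \<open>
  Fix a Hoelder exponent \<open>g\<close> of the weight strictly between \<open>1/\<tau> - 1/2\<close> and \<open>1/\<tau> - \<alpha>\<close>.
  The increment over \<open>h\<close> of \<open>(t - s)\<^sup>-\<^sup>\<alpha> \<Phi>(s)\<close> is the weight times the increment of \<open>\<Phi>\<close> plus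
  the increment of the weight times \<open>\<Phi>\<close>. The first part is controlled by Hoelder's inequality
  with exponents \<open>q/\<tau>\<close> and its conjugate, hence by the \<open>L\<^sup>q\<close> modulus of continuity of \<open>\<Phi>\<close>;
  the second by \<open>\<bar>h\<bar>\<^sup>g\<close> times the \<open>L\<^sup>\<infinity>\<close> norm of \<open>\<Phi>\<close> times negative powers of the distances
  to the singular points \<open>0\<close>, \<open>t\<close>, \<open>t - h\<close>, integrable because \<open>(\<alpha> + g) \<tau> < 1\<close>. As
  \<open>g > 1/\<tau> - 1/2\<close>, the resulting error \<open>\<rho>\<^sup>g\<^sup>\<tau>\<close> is integrable against the Besov weight. Every
  singular integral over \<open>(0, t)\<close> carries a positive power of \<open>t\<close>, which produces \<open>T\<^sub>0\<^sup>\<epsilon>\<^sup>0\<close>.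
\<close>

lemma le_powr_of_le_one:
  fixes x e :: real
  assumes "0 \<le> x" "x \<le> 1" "e \<le> 1"
  shows "x \<le> x powr e"
  using powr_mono'[of e 1 x] assms by simp

lemma powr_add_le_add_powr:
  fixes a b e :: real
  assumes "0 \<le> a" "0 \<le> b" "0 < e" "e \<le> 1"
  shows "(a + b) powr e \<le> a powr e + b powr e"
proof (cases "a + b = 0")
  case True
  then show ?thesis using assms by simp
next
  case False
  then have s: "0 < a + b" using assms by simp
  define \<theta> where "\<theta> = a / (a + b)"
  have \<theta>: "0 \<le> \<theta>" "\<theta> \<le> 1" using assms s by (auto simp: \<theta>_def)
  have a: "a = \<theta> * (a + b)" and b: "b = (1 - \<theta>) * (a + b)"
    using s by (auto simp: \<theta>_def field_simps)
  have "(a + b) powr e * 1 \<le> (a + b) powr e * (\<theta> powr e + (1 - \<theta>) powr e)"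
    using \<theta> assms le_powr_of_le_one[of \<theta> e] le_powr_of_le_one[of "1 - \<theta>" e]
    by (intro mult_left_mono) auto
  also have "\<dots> = a powr e + b powr e"
  proof -
    have "a powr e = \<theta> powr e * (a + b) powr e"
      by (subst a) (use \<theta> s in \<open>simp add: powr_mult\<close>)
    moreover have "b powr e = (1 - \<theta>) powr e * (a + b) powr e"
      by (subst b) (use \<theta> s in \<open>simp add: powr_mult\<close>)
    ultimately show ?thesis by (simp add: algebra_simps)
  qed
  finally show ?thesis by simp
qed

lemma powr_add_le_two_powr:
  fixes x y p :: real
  assumes "0 \<le> x" "0 \<le> y" "0 \<le> p"
  shows "(x + y) powr p \<le> 2 powr p * (x powr p + y powr p)"
proof -
  have "(x + y) powr p \<le> (2 * max x y) powr p" using assms by (intro powr_mono2) auto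
  also have "\<dots> = 2 powr p * max x y powr p" using assms by (simp add: powr_mult)
  also have "\<dots> \<le> 2 powr p * (x powr p + y powr p)"
    by (intro mult_left_mono) (auto simp: max_def)
  finally show ?thesis .
qed

lemma min_powr_le_add:
  fixes x y k :: real
  shows "min x y powr k \<le> x powr k + y powr k"
  by (cases "x \<le> y") (auto simp: min_def)

lemma powr_neg_diff_le:
  fixes x y a g :: real
  assumes "0 < x" "0 < y" "0 \<le> a" "a \<le> 1" "0 \<le> g" "g \<le> 1"
  shows "\<bar>x powr (-a) - y powr (-a)\<bar> \<le> \<bar>x - y\<bar> powr g * min x y powr (-(a + g))"
proof -
  have ordered: "\<bar>u powr (-a) - v powr (-a)\<bar> \<le> (v - u) powr g * u powr (-(a + g))"
    if uv: "0 < u" "u \<le> v" for u v :: real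
  proof -
    have "v powr (-a) \<le> u powr (-a)" using uv assms by (intro powr_mono2') auto
    then have "\<bar>u powr (-a) - v powr (-a)\<bar> = u powr (-a) * (1 - (u/v) powr a)"
      using uv by (simp add: powr_divide powr_minus field_simps)
    also have "\<dots> \<le> u powr (-a) * ((v - u)/v)"
      using uv assms le_powr_of_le_one[of "u/v" a] by (intro mult_left_mono) (auto simp: field_simps)
    also have "\<dots> \<le> u powr (-a) * ((v - u)/v) powr g"
      using uv assms by (intro mult_left_mono le_powr_of_le_one) auto
    also have "\<dots> \<le> u powr (-a) * ((v - u)/u) powr g"
      using uv assms by (intro mult_left_mono powr_mono2 divide_left_mono) auto
    also have "\<dots> = (v - u) powr g * u powr (-(a + g))"
    proof -
      have "u powr (-(a + g)) = u powr (-a) * u powr (-g)" by (simp add: powr_add[symmetric])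
      then show ?thesis using uv by (simp add: powr_divide powr_minus field_simps)
    qed
    finally show ?thesis .
  qed
  show ?thesis
  proof (cases "x \<le> y")
    case True
    then show ?thesis using ordered[of x y] assms by simp
  next
    case False
    then show ?thesis
      using ordered[of y x] assms by (simp add: abs_minus_commute min.commute)
  qed
qed

lemma powr_neg_le_of_le:
  fixes u \<mu> h a g :: real
  assumes "0 < \<mu>" "\<mu> \<le> u" "\<mu> \<le> \<bar>h\<bar>" "0 \<le> a" "0 \<le> g"
  shows "u powr (-a) \<le> \<bar>h\<bar> powr g * \<mu> powr (-(a + g))"
proof -
  have "u powr (-a) \<le> \<mu> powr (-a)" using assms by (intro powr_mono2') auto
  also have "\<dots> = \<mu> powr g * \<mu> powr (-(a + g))" using assms by (simp add: powr_add[symmetric])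
  also have "\<dots> \<le> \<bar>h\<bar> powr g * \<mu> powr (-(a + g))"
    using assms by (intro mult_right_mono powr_mono2) auto
  finally show ?thesis .
qed

lemma young_powr_param:
  fixes V U l r r' :: real
  assumes "0 \<le> V" "0 \<le> U" "0 < l" "1 < r" "1 < r'" "1/r + 1/r' = 1"
  shows "V * U \<le> l powr r * V powr r + l powr (-r') * U powr r'"
proof -
  have "(l * V) * (U / l) \<le> (l * V) powr r / r + (U / l) powr r' / r'"
    using assms by (intro Youngs_inequality) auto
  also have "\<dots> \<le> (l * V) powr r + (U / l) powr r'"
    using assms divide_left_mono[of 1 r "(l * V) powr r"] divide_left_mono[of 1 r' "(U / l) powr r'"]
    by (intro add_mono) auto
  also have "(U / l) powr r' = l powr (-r') * U powr r'"
    using assms by (simp add: powr_divide) (simp add: powr_minus divide_inverse mult.commute)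
  also have "(l * V) powr r = l powr r * V powr r"
    using assms by (simp add: powr_mult)
  finally show ?thesis using assms by simp
qed

lemma young_balanced_param:
  fixes W x r r' :: real
  assumes "0 < W" "0 < x" "1 < r" "1 < r'" "1/r + 1/r' = 1"
  defines "l \<equiv> (x / W) powr (1 / (r + r'))"
  shows "l powr r * W = x powr (1/r') * W powr (1/r)"
    and "l powr (-r') * x = x powr (1/r') * W powr (1/r)"
proof -
  have rr: "r + r' = r * r'" using assms by (simp add: field_simps)
  have e1: "r / (r + r') = 1/r'" and e2: "r' / (r + r') = 1/r"
    using rr assms by (simp_all add: field_simps)
  have "l powr r * W = (x / W) powr (1/r') * W" using e1 by (simp add: l_def powr_powr)
  also have "\<dots> = x powr (1/r') * W powr (1 - 1/r')"
    using \<open>0 < W\<close> \<open>0 < x\<close> by (simp add: powr_divide powr_diff field_simps)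
  also have "1 - 1/r' = 1/r" using assms by simp
  finally show "l powr r * W = x powr (1/r') * W powr (1/r)" .
  have "l powr (-r') * x = (x / W) powr (- (1/r)) * x" using e2 by (simp add: l_def powr_powr)
  also have "\<dots> = x powr (1 - 1/r) * W powr (1/r)"
    using \<open>0 < W\<close> \<open>0 < x\<close> by (simp add: powr_divide powr_minus powr_diff field_simps)
  also have "1 - 1/r = 1/r'" using assms by simp
  finally show "l powr (-r') * x = x powr (1/r') * W powr (1/r)" .
qed

section \<open>Powers of extended reals and Hoelder's inequality\<close>

lemma enn_powr_ennreal: "0 \<le> x \<Longrightarrow> enn_powr (ennreal x) p = ennreal (x powr p)"
  by (simp add: enn_powr_def)

lemma enn_powr_zero [simp]: "enn_powr 0 p = 0"
  by (simp add: enn_powr_def)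

lemma enn_powr_top [simp]: "enn_powr top p = top"
  by (simp add: enn_powr_def)

lemma enn_powr_one [simp]: "enn_powr x 1 = x"
  by (cases x) (auto simp: enn_powr_def)

lemma enn_powr_mono:
  assumes "x \<le> y" "0 \<le> p"
  shows "enn_powr x p \<le> enn_powr y p"
proof (cases "y = top")
  case False
  then have "x \<noteq> top" using assms by (auto simp: top_unique)
  then show ?thesis using False assms
    by (auto simp: enn_powr_def top.not_eq_extremum intro!: ennreal_leI powr_mono2 enn2real_mono)
qed simp

lemma enn_powr_powr: "0 < a \<Longrightarrow> enn_powr (enn_powr x a) b = enn_powr x (a * b)"
  by (cases "x = top") (auto simp: enn_powr_def powr_powr)

lemma enn_powr_mult:
  assumes "0 \<le> c" "0 < p"
  shows "enn_powr (ennreal c * x) p = ennreal (c powr p) * enn_powr x p"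
proof (cases "c = 0")
  case False
  show ?thesis
  proof (cases "x = top")
    case True
    then show ?thesis using False assms
      by (simp add: ennreal_mult_top enn_powr_def ennreal_mult_eq_top_iff)
  next
    case False
    then obtain y where "x = ennreal y" "0 \<le> y" by (cases x) auto
    then show ?thesis using assms
      by (simp add: enn_powr_def ennreal_mult''[symmetric] powr_mult ennreal_mult_eq_top_iff
          flip: ennreal_mult)
  qed
qed simp

lemma enn_powr_add_le:
  assumes "0 < e" "e \<le> 1"
  shows "enn_powr (x + y) e \<le> enn_powr x e + enn_powr y e"
proof (cases "x = top \<or> y = top")
  case False
  then obtain a b where "x = ennreal a" "y = ennreal b" "0 \<le> a" "0 \<le> b"
    by (cases x; cases y) auto
  then show ?thesis using assms
    by (simp add: enn_powr_ennreal flip: ennreal_plus)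
       (intro ennreal_leI powr_add_le_add_powr, auto)
qed auto

lemma ennreal_le_of_young_bound:
  fixes A X :: ennreal and W r r' :: real
  assumes W: "0 < W" and r: "1 < r" "1 < r'" "1/r + 1/r' = 1"
    and bound: "\<And>l. 0 < l \<Longrightarrow> A \<le> ennreal (l powr r * W) + ennreal (l powr (-r')) * X"
  shows "A \<le> ennreal (2 * W powr (1/r)) * enn_powr X (1/r')"
proof (cases "X = top")
  case True
  then show ?thesis using W by (simp add: ennreal_mult_top)
next
  case False
  then obtain x where x: "X = ennreal x" "0 \<le> x" by (cases X) auto
  show ?thesis
  proof (cases "x = 0")
    case True
    have "A \<le> 0"
    proof (rule ennreal_le_epsilon)
      fix e :: real
      assume e: "0 < e"
      have "((e / W) powr (1/r)) powr r * W = e" using e W r by (simp add: powr_powr)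
      then show "A \<le> 0 + ennreal e"
        using bound[of "(e / W) powr (1/r)"] x True e W by simp
    qed
    then show ?thesis by simp
  next
    case False
    define l where "l = (x / W) powr (1 / (r + r'))"
    have "0 < l" using False x W by (simp add: l_def)
    have xp: "0 < x" using False x by simp
    note balanced = young_balanced_param[OF W xp r, folded l_def]
    have "A \<le> ennreal (l powr r * W) + ennreal (l powr (-r')) * X"
      using bound[OF \<open>0 < l\<close>] .
    also have "\<dots> = ennreal (l powr r * W + l powr (-r') * x)"
      using x \<open>0 < l\<close> W by (simp add: ennreal_plus ennreal_mult'')
    also have "\<dots> = ennreal (2 * W powr (1/r)) * enn_powr X (1/r')"
      using x balanced by (simp add: enn_powr_ennreal ennreal_mult''[symmetric] algebra_simps)
    finally show ?thesis .
  qed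
qed

text \<open>Hoelder's inequality with the constant 2 that Young's inequality gives without
  normalising the factors.\<close>
lemma nn_integral_mult_le_Holder:
  fixes V U :: "'b \<Rightarrow> real" and W r r' :: real
  assumes [measurable]: "V \<in> borel_measurable M" "U \<in> borel_measurable M"
    and nonneg: "\<And>x. 0 \<le> V x" "\<And>x. 0 \<le> U x"
    and r: "1 < r" "1 < r'" "1/r + 1/r' = 1"
    and W: "0 < W" "(\<integral>\<^sup>+x. ennreal (V x powr r) \<partial>M) \<le> ennreal W"
  shows "(\<integral>\<^sup>+x. ennreal (V x * U x) \<partial>M)
    \<le> ennreal (2 * W powr (1/r)) * enn_powr (\<integral>\<^sup>+x. ennreal (U x powr r') \<partial>M) (1/r')"
proof (rule ennreal_le_of_young_bound[OF W(1) r])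
  fix l :: real
  assume l: "0 < l"
  have "(\<integral>\<^sup>+x. ennreal (V x * U x) \<partial>M)
      \<le> (\<integral>\<^sup>+x. ennreal (l powr r) * ennreal (V x powr r)
                + ennreal (l powr (-r')) * ennreal (U x powr r') \<partial>M)"
    using young_powr_param[OF nonneg l r]
    by (intro nn_integral_mono)
       (simp add: ennreal_mult[symmetric] ennreal_plus[symmetric] ennreal_leI del: ennreal_plus)
  also have "\<dots> = ennreal (l powr r) * (\<integral>\<^sup>+x. ennreal (V x powr r) \<partial>M)
      + ennreal (l powr (-r')) * (\<integral>\<^sup>+x. ennreal (U x powr r') \<partial>M)"
    by (simp add: nn_integral_cmult nn_integral_add)
  also have "\<dots> \<le> ennreal (l powr r * W) + ennreal (l powr (-r')) * (\<integral>\<^sup>+x. ennreal (U x powr r') \<partial>M)"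
    using W by (simp add: ennreal_mult mult_left_mono)
  finally show "(\<integral>\<^sup>+x. ennreal (V x * U x) \<partial>M)
      \<le> ennreal (l powr r * W) + ennreal (l powr (-r')) * (\<integral>\<^sup>+x. ennreal (U x powr r') \<partial>M)" .
qed

section \<open>Integrals of singular powers\<close>

lemma nn_integral_powr_le:
  fixes b c :: real
  assumes "0 < b" "0 < c"
  shows "(\<integral>\<^sup>+x. ennreal (x powr (b - 1)) * indicator {0<..<c} x \<partial>lborel) \<le> ennreal (c powr b / b)"
proof -
  have "((\<lambda>x. x powr (b - 1)) has_integral (c powr (b - 1 + 1) / (b - 1 + 1))) {0..c}"
    using assms by (intro has_integral_powr_from_0) auto
  from nn_integral_has_integral_lebesgue'[OF _ this]
  have "(\<integral>\<^sup>+x. ennreal (x powr (b - 1)) * indicator {0..c} x \<partial>lborel) = ennreal (c powr b / b)"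
    by simp
  moreover have "(\<integral>\<^sup>+x. ennreal (x powr (b - 1)) * indicator {0<..<c} x \<partial>lborel)
      \<le> (\<integral>\<^sup>+x. ennreal (x powr (b - 1)) * indicator {0..c} x \<partial>lborel)"
    by (intro nn_integral_mono) (auto simp: indicator_def)
  ultimately show ?thesis by simp
qed

lemma nn_integral_powr_neg_le:
  fixes k t :: real
  assumes "0 \<le> k" "k < 1" "0 < t"
  shows "(\<integral>\<^sup>+x. ennreal (x powr (-k)) * indicator {0<..<t} x \<partial>lebesgue) \<le> ennreal (t powr (1 - k) / (1 - k))"
  using nn_integral_powr_le[of "1 - k" t] assms by (simp add: nn_integral_completion)

lemma nn_integral_reflected_powr_neg_le:
  fixes k t :: real
  assumes "0 \<le> k" "k < 1" "0 < t"
  shows "(\<integral>\<^sup>+x. ennreal ((t - x) powr (-k)) * indicator {0<..<t} x \<partial>lebesgue) \<le> ennreal (t powr (1 - k) / (1 - k))"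
proof -
  have "(\<integral>\<^sup>+x. ennreal (x powr (-k)) * indicator {0<..<t} x \<partial>lebesgue)
     = ennreal \<bar>-1\<bar> * (\<integral>\<^sup>+x. ennreal ((t + -1 * x) powr (-k)) * indicator {0<..<t} (t + -1 * x) \<partial>lebesgue)"
    by (rule nn_integral_real_affine_lebesgue) (auto intro!: measurable_completion)
  also have "(\<lambda>x. ennreal ((t + -1 * x) powr (-k)) * indicator {0<..<t} (t + -1 * x))
     = (\<lambda>x. ennreal ((t - x) powr (-k)) * indicator {0<..<t} x)"
    by (auto simp: indicator_def fun_eq_iff)
  finally show ?thesis using nn_integral_powr_neg_le[OF assms] by simp
qed

lemma nn_integral_shifted_powr_neg_le:
  fixes k t h :: real
  assumes "0 \<le> k" "k < 1" "0 < t"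
  shows "(\<integral>\<^sup>+x. ennreal ((t - (x + h)) powr (-k)) * indicator {0<..<t} (x + h) \<partial>lebesgue)
    \<le> ennreal (t powr (1 - k) / (1 - k))"
proof -
  have "(\<integral>\<^sup>+x. ennreal ((t - x) powr (-k)) * indicator {0<..<t} x \<partial>lebesgue)
     = ennreal \<bar>1\<bar> * (\<integral>\<^sup>+x. ennreal ((t - (h + 1 * x)) powr (-k)) * indicator {0<..<t} (h + 1 * x) \<partial>lebesgue)"
    by (rule nn_integral_real_affine_lebesgue) (auto intro!: measurable_completion)
  then show ?thesis using nn_integral_reflected_powr_neg_le[OF assms] by (simp add: add.commute)
qed

section \<open>Measurability and null sets\<close>

lemma borel_measurable_norm_diff_finite_range:
  fixes F G :: "real \<Rightarrow> 'a::real_normed_vector"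
  assumes F: "F \<in> borel_measurable lebesgue" and G: "G \<in> borel_measurable lebesgue"
    and fin: "finite (range F)"
  shows "(\<lambda>s. norm (F s - G s)) \<in> borel_measurable lebesgue"
proof -
  have f: "(\<lambda>s. norm (y - G s)) \<in> borel_measurable lebesgue" for y
  proof -
    have "(\<lambda>z. norm (y - z)) \<in> borel_measurable borel"
      by (intro borel_measurable_continuous_onI continuous_intros)
    from measurable_compose[OF G this] show ?thesis by (simp add: o_def)
  qed
  have g: "F \<in> lebesgue \<rightarrow>\<^sub>M count_space (range F)"
  proof (subst measurable_count_space_eq2[OF fin], intro conjI ballI)
    fix y
    show "F -` {y} \<inter> space lebesgue \<in> sets lebesgue"
      by (rule measurable_sets[OF F]) simp
  qed auto
  show ?thesis
    by (rule measurable_compose_countable'[where f="\<lambda>y s. norm (y - G s)" and I="range F", OF f g])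
       (use fin in \<open>auto intro: countable_finite\<close>)
qed

lemma lebesgue_measurable_translate: "(\<lambda>s::real. s + h) \<in> lebesgue \<rightarrow>\<^sub>M lebesgue"
  using lebesgue_affine_measurable[where c="\<lambda>_::real. 1" and t=h] by (simp add: add.commute)

text \<open>Only the norms of the increments become measurable: \<open>\<Phi>\<close> itself need not be Borel
  measurable into a non-separable space.\<close>
lemma strongly_measurable_on_representative:
  fixes \<Phi> :: "real \<Rightarrow> 'a::real_normed_vector"
  assumes "strongly_measurable_on I \<Phi>" "I \<in> sets lebesgue"
  obtains \<Psi> where "AE s in lebesgue. s \<in> I \<longrightarrow> \<Psi> s = \<Phi> s"
    and "\<And>h. (\<lambda>s. norm (\<Psi> (s + h) - \<Psi> s)) \<in> borel_measurable lebesgue"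
proof -
  from assms(1) obtain g :: "nat \<Rightarrow> real \<Rightarrow> 'a" where
    g: "\<And>n. g n \<in> borel_measurable lebesgue" "\<And>n. finite (range (g n))"
    and ae: "AE s in lebesgue. s \<in> I \<longrightarrow> (\<lambda>n. g n s) \<longlonglongrightarrow> \<Phi> s"
    unfolding strongly_measurable_on_def by blast
  from ae obtain N where N: "{s \<in> space lebesgue. \<not> (s \<in> I \<longrightarrow> (\<lambda>n. g n s) \<longlonglongrightarrow> \<Phi> s)} \<subseteq> N"
    "emeasure lebesgue N = 0" "N \<in> sets lebesgue"
    by (rule AE_E)
  define S where "S = I - N"
  have S: "S \<in> sets lebesgue" using assms(2) N(3) unfolding S_def by (rule sets.Diff)
  define gS where "gS n s = (if s \<in> S then g n s else 0)" for n s
  define \<Psi> where "\<Psi> s = (if s \<in> S then \<Phi> s else 0)" for s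
  have gS_meas: "gS n \<in> borel_measurable lebesgue" for n
    unfolding gS_def by (rule measurable_If_set[OF g(1)]) (use S in auto)
  have gS_fin: "finite (range (gS n))" for n
    by (rule finite_subset[of _ "insert 0 (range (g n))"]) (use g(2) in \<open>auto simp: gS_def\<close>)
  have lim: "(\<lambda>n. gS n s) \<longlonglongrightarrow> \<Psi> s" for s
    using N(1) by (cases "s \<in> S") (auto simp: gS_def \<Psi>_def S_def)
  have "(\<lambda>s. norm (\<Psi> (s + h) - \<Psi> s)) \<in> borel_measurable lebesgue" for h
  proof (rule borel_measurable_LIMSEQ_real)
    fix s
    show "(\<lambda>n. norm (gS n (s + h) - gS n s)) \<longlonglongrightarrow> norm (\<Psi> (s + h) - \<Psi> s)"
      by (intro tendsto_norm tendsto_diff lim)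
  next
    fix n
    have "(\<lambda>s. gS n (s + h)) \<in> borel_measurable lebesgue"
      using measurable_compose[OF lebesgue_measurable_translate gS_meas] by (simp add: o_def)
    moreover have "finite (range (\<lambda>s. gS n (s + h)))"
      by (rule finite_subset[OF _ gS_fin[of n]]) auto
    ultimately show "(\<lambda>s. norm (gS n (s + h) - gS n s)) \<in> borel_measurable lebesgue"
      using borel_measurable_norm_diff_finite_range gS_meas by blast
  qed
  moreover have "AE s in lebesgue. s \<notin> N"
    using N(2,3) by (intro AE_not_in) (simp add: null_sets_def)
  then have "AE s in lebesgue. s \<in> I \<longrightarrow> \<Psi> s = \<Phi> s"
    by (rule eventually_mono) (simp add: \<Psi>_def S_def)
  ultimately show ?thesis using that by blast
qed

lemma AE_lebesgue_translate:
  assumes "AE s in lebesgue. P s"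
  shows "AE s in lebesgue. P (s + h)"
proof -
  from assms obtain N where "{s \<in> space lebesgue. \<not> P s} \<subseteq> N" "emeasure lebesgue N = 0"
    "N \<in> sets lebesgue"
    by (rule AE_E)
  then have N: "N \<in> null_sets lebesgue" "\<And>s. s \<notin> N \<Longrightarrow> P s"
    by (auto simp: null_sets_def)
  have "negligible N" using N(1) by (simp add: negligible_iff_null_sets)
  then have "negligible ((+) (-h) ` N)" by (rule negligible_translation)
  then have "(+) (-h) ` N \<in> null_sets lebesgue" by (simp add: negligible_iff_null_sets)
  then have "AE s in lebesgue. s \<notin> (+) (-h) ` N" by (rule AE_not_in)
  then show ?thesis
    by (rule eventually_mono) (use N(2) in \<open>force intro: image_eqI[where x="_ + h"]\<close>)
qed

lemma AE_norm_le_Linf_norm: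
  fixes \<Phi> :: "real \<Rightarrow> 'a::real_normed_vector"
  assumes "Linf_norm J \<Phi> \<noteq> top"
  shows "AE s in lebesgue. s \<in> J \<longrightarrow> norm (\<Phi> s) \<le> enn2real (Linf_norm J \<Phi>)"
proof -
  define m where "m = enn2real (Linf_norm J \<Phi>)"
  have M: "Linf_norm J \<Phi> = ennreal m" "0 \<le> m"
    using assms by (auto simp: m_def top.not_eq_extremum intro: ennreal_enn2real[symmetric])
  have approx: "AE s in lebesgue. s \<in> J \<longrightarrow> norm (\<Phi> s) \<le> m + 1 / Suc n" for n :: nat
  proof -
    have "Linf_norm J \<Phi> < ennreal (m + 1 / Suc n)" using M by (simp add: ennreal_lessI)
    then obtain C where C: "AE s in lebesgue. s \<in> J \<longrightarrow> ennreal (norm (\<Phi> s)) \<le> C"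
      "C < ennreal (m + 1 / Suc n)"
      unfolding Linf_norm_def by (auto simp: Inf_less_iff)
    from C(1) show ?thesis
      by (rule eventually_mono) (use C(2) M(2) in \<open>auto simp: ennreal_le_iff[symmetric]\<close>)
  qed
  have "AE s in lebesgue. \<forall>n::nat. s \<in> J \<longrightarrow> norm (\<Phi> s) \<le> m + 1 / Suc n"
    by (rule AE_all_countable[THEN iffD2]) (use approx in blast)
  then show ?thesis unfolding m_def[symmetric]
  proof (rule eventually_mono, intro impI)
    fix s
    assume "\<forall>n::nat. s \<in> J \<longrightarrow> norm (\<Phi> s) \<le> m + 1 / Suc n" "s \<in> J"
    then have "\<forall>n::nat. norm (\<Phi> s) - m \<le> inverse (real (Suc n))"
      by (simp add: inverse_eq_divide algebra_simps)
    then show "norm (\<Phi> s) \<le> m"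
      using reals_Archimedean not_less by (metis diff_gt_0_iff_gt order.strict_trans2)
  qed
qed

section \<open>Modulus of continuity and Besov seminorm\<close>

definition Lq_modulus :: "real \<Rightarrow> real set \<Rightarrow> (real \<Rightarrow> 'a::real_normed_vector) \<Rightarrow> real \<Rightarrow> ennreal" where
  "Lq_modulus q I f \<rho> = (SUP h\<in>{h. \<bar>h\<bar> < \<rho>}. Lq_norm q I (\<lambda>s. transl I h f s - f s))"

definition besov_seminorm :: "real \<Rightarrow> real \<Rightarrow> real \<Rightarrow> real set \<Rightarrow> (real \<Rightarrow> 'a::real_normed_vector) \<Rightarrow> ennreal" where
  "besov_seminorm q r sm I f = enn_powr (\<integral>\<^sup>+ \<rho>\<in>{0<..<1}.
     ennreal (\<rho> powr (- sm * r) / \<rho>) * enn_powr (Lq_modulus q I f \<rho>) r \<partial>lborel) (1 / r)"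

lemma besov_norm_eq: "besov_norm q r sm I f = Lq_norm q I f + besov_seminorm q r sm I f"
  by (simp add: besov_norm_def besov_seminorm_def Lq_modulus_def)

lemma besov_seminorm_le_besov_norm: "besov_seminorm q r sm I f \<le> besov_norm q r sm I f"
  by (simp add: besov_norm_eq)

lemma besov_norm_empty: "besov_norm q r sm {} f = 0"
proof -
  have "(SUP h\<in>H. 0::ennreal) = 0" for H :: "real set"
    by (cases "H = {}") (auto simp: bot_ennreal)
  then show ?thesis by (simp add: besov_norm_def Lq_norm_def)
qed

lemma Lq_norm_cong_AE:
  assumes "AE s in lebesgue. s \<in> I \<longrightarrow> f s = g s"
  shows "Lq_norm q I f = Lq_norm q I g"
proof -
  have "(\<integral>\<^sup>+ s\<in>I. ennreal (norm (f s) powr q) \<partial>lebesgue) = (\<integral>\<^sup>+ s\<in>I. ennreal (norm (g s) powr q) \<partial>lebesgue)"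
    by (rule nn_integral_cong_AE) (use assms in \<open>eventually_elim, auto simp: indicator_def\<close>)
  then show ?thesis by (simp add: Lq_norm_def)
qed

lemma Linf_norm_cong_AE:
  assumes "AE s in lebesgue. s \<in> I \<longrightarrow> f s = g s"
  shows "Linf_norm I f = Linf_norm I g"
proof -
  have "(AE s in lebesgue. s \<in> I \<longrightarrow> ennreal (norm (f s)) \<le> C)
    \<longleftrightarrow> (AE s in lebesgue. s \<in> I \<longrightarrow> ennreal (norm (g s)) \<le> C)" for C
  proof
    assume "AE s in lebesgue. s \<in> I \<longrightarrow> ennreal (norm (f s)) \<le> C"
    with assms show "AE s in lebesgue. s \<in> I \<longrightarrow> ennreal (norm (g s)) \<le> C"
      by eventually_elim auto
  next
    assume "AE s in lebesgue. s \<in> I \<longrightarrow> ennreal (norm (g s)) \<le> C"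
    with assms show "AE s in lebesgue. s \<in> I \<longrightarrow> ennreal (norm (f s)) \<le> C"
      by eventually_elim auto
  qed
  then show ?thesis by (simp add: Linf_norm_def)
qed

lemma besov_norm_cong_AE:
  assumes "AE s in lebesgue. s \<in> I \<longrightarrow> f s = g s"
  shows "besov_norm q r sm I f = besov_norm q r sm I g"
proof -
  have "AE s in lebesgue. s \<in> I \<longrightarrow> transl I h f s - f s = transl I h g s - g s" for h
    using assms AE_lebesgue_translate[OF assms, of h] by eventually_elim (auto simp: transl_def)
  then have "Lq_norm q I (\<lambda>s. transl I h f s - f s) = Lq_norm q I (\<lambda>s. transl I h g s - g s)" for h
    by (rule Lq_norm_cong_AE)
  then show ?thesis using Lq_norm_cong_AE[OF assms] by (simp add: besov_norm_def)
qed

lemma borel_measurable_mono_ennreal: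
  fixes G :: "real \<Rightarrow> ennreal"
  assumes "mono G"
  shows "G \<in> borel_measurable borel"
proof (rule borel_measurableI_greater)
  fix y
  have "is_interval {x. y < G x}"
    using assms by (auto simp: is_interval_1 dest: monoD intro: less_le_trans)
  then show "{x \<in> space borel. y < G x} \<in> sets borel"
    by (simp add: real_interval_borel_measurable)
qed

lemma mono_Lq_modulus: "mono (Lq_modulus q I f)"
  by (auto intro!: monoI SUP_subset_mono simp: Lq_modulus_def)

lemma besov_seminorm_le_of_Lq_modulus_le:
  fixes f :: "real \<Rightarrow> 'a::real_normed_vector" and g :: "real \<Rightarrow> 'b::real_normed_vector"
  assumes r: "1 \<le> r" and \<gamma>: "sm * r < \<gamma>" and AB: "0 \<le> A" "0 \<le> B"
    and bound: "\<And>\<rho>. 0 < \<rho> \<Longrightarrow> enn_powr (Lq_modulus p I f \<rho>) r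
      \<le> ennreal A * enn_powr (Lq_modulus q J g \<rho>) r + ennreal (B * \<rho> powr \<gamma>)"
  shows "besov_seminorm p r sm I f
    \<le> ennreal (A powr (1/r)) * besov_seminorm q r sm J g + ennreal ((B / (\<gamma> - sm * r)) powr (1/r))"
proof -
  define W where "W \<rho> = ennreal (\<rho> powr (- sm * r) / \<rho>)" for \<rho> :: real
  define G where "G \<rho> = enn_powr (Lq_modulus q J g \<rho>) r" for \<rho>
  define b where "b = \<gamma> - sm * r"
  have b: "0 < b" using \<gamma> by (simp add: b_def)
  have "mono G"
    using monoD[OF mono_Lq_modulus] r by (auto intro!: monoI enn_powr_mono simp: G_def)
  then have [measurable]: "G \<in> borel_measurable borel" by (rule borel_measurable_mono_ennreal)
  have [measurable]: "W \<in> borel_measurable borel" unfolding W_def by measurable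
  have W_pow: "W \<rho> * ennreal (\<rho> powr \<gamma>) = ennreal (\<rho> powr (b - 1))" if "0 < \<rho>" for \<rho>
  proof -
    have "\<rho> powr (- sm * r) / \<rho> * \<rho> powr \<gamma> = \<rho> powr (- sm * r - 1 + \<gamma>)"
      using that by (simp add: powr_diff powr_add)
    also have "- sm * r - 1 + \<gamma> = b - 1" by (simp add: b_def)
    finally show ?thesis
      unfolding W_def using that by (simp add: ennreal_mult[symmetric] del: ennreal_mult)
  qed
  have "(\<integral>\<^sup>+ \<rho>\<in>{0<..<1}. W \<rho> * enn_powr (Lq_modulus p I f \<rho>) r \<partial>lborel)
     \<le> (\<integral>\<^sup>+ \<rho>. ennreal A * (W \<rho> * G \<rho> * indicator {0<..<1} \<rho>)
           + ennreal B * (ennreal (\<rho> powr (b - 1)) * indicator {0<..<1} \<rho>) \<partial>lborel)"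
  proof (intro nn_integral_mono)
    fix \<rho> :: real
    show "W \<rho> * enn_powr (Lq_modulus p I f \<rho>) r * indicator {0<..<1} \<rho>
      \<le> ennreal A * (W \<rho> * G \<rho> * indicator {0<..<1} \<rho>)
           + ennreal B * (ennreal (\<rho> powr (b - 1)) * indicator {0<..<1} \<rho>)"
    proof (cases "\<rho> \<in> {0<..<1}")
      case True
      then have \<rho>: "0 < \<rho>" by simp
      have "W \<rho> * enn_powr (Lq_modulus p I f \<rho>) r \<le> W \<rho> * (ennreal A * G \<rho> + ennreal (B * \<rho> powr \<gamma>))"
        unfolding G_def by (intro mult_left_mono bound[OF \<rho>]) auto
      also have "\<dots> = ennreal A * (W \<rho> * G \<rho>) + ennreal B * (W \<rho> * ennreal (\<rho> powr \<gamma>))"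
        using AB by (simp add: distrib_left ennreal_mult mult.assoc mult.left_commute)
      finally show ?thesis using True W_pow[OF \<rho>] by simp
    qed simp
  qed
  also have "\<dots> = ennreal A * (\<integral>\<^sup>+ \<rho>\<in>{0<..<1}. W \<rho> * G \<rho> \<partial>lborel)
     + ennreal B * (\<integral>\<^sup>+ \<rho>. ennreal (\<rho> powr (b - 1)) * indicator {0<..<1} \<rho> \<partial>lborel)"
    by (simp add: nn_integral_add nn_integral_cmult)
  also have "\<dots> \<le> ennreal A * (\<integral>\<^sup>+ \<rho>\<in>{0<..<1}. W \<rho> * G \<rho> \<partial>lborel) + ennreal (B / b)"
  proof -
    have "ennreal B * (\<integral>\<^sup>+ \<rho>. ennreal (\<rho> powr (b - 1)) * indicator {0<..<1} \<rho> \<partial>lborel)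
        \<le> ennreal B * ennreal (1 / b)"
      using nn_integral_powr_le[OF b, of 1] by (intro mult_left_mono) auto
    then show ?thesis using AB b by (simp add: ennreal_mult[symmetric])
  qed
  finally have integral_le: "(\<integral>\<^sup>+ \<rho>\<in>{0<..<1}. W \<rho> * enn_powr (Lq_modulus p I f \<rho>) r \<partial>lborel)
     \<le> ennreal A * (\<integral>\<^sup>+ \<rho>\<in>{0<..<1}. W \<rho> * G \<rho> \<partial>lborel) + ennreal (B / b)" .
  have r_inv: "0 < 1/r" "1/r \<le> 1" using r by auto
  have "besov_seminorm p r sm I f
      \<le> enn_powr (ennreal A * (\<integral>\<^sup>+ \<rho>\<in>{0<..<1}. W \<rho> * G \<rho> \<partial>lborel) + ennreal (B / b)) (1/r)"
    unfolding besov_seminorm_def W_def[symmetric] using integral_le r_inv by (intro enn_powr_mono) auto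
  also have "\<dots> \<le> enn_powr (ennreal A * (\<integral>\<^sup>+ \<rho>\<in>{0<..<1}. W \<rho> * G \<rho> \<partial>lborel)) (1/r)
      + enn_powr (ennreal (B / b)) (1/r)"
    by (rule enn_powr_add_le[OF r_inv])
  also have "\<dots> = ennreal (A powr (1/r)) * besov_seminorm q r sm J g + ennreal ((B / b) powr (1/r))"
    using AB b r_inv by (simp add: enn_powr_mult enn_powr_ennreal besov_seminorm_def W_def G_def)
  finally show ?thesis by (simp add: b_def)
qed

section \<open>The weighted function at a fixed time\<close>

lemma norm_weight_diff_le:
  fixes \<phi>0 \<phi>1 :: "'a::real_normed_vector" and x y a g m :: real
  assumes "0 < x" "0 < y" "0 \<le> a" "a \<le> 1" "0 \<le> g" "g \<le> 1" "norm \<phi>0 \<le> m"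
  shows "norm (x powr (-a) *\<^sub>R \<phi>1 - y powr (-a) *\<^sub>R \<phi>0)
    \<le> x powr (-a) * norm (\<phi>1 - \<phi>0) + \<bar>x - y\<bar> powr g * min x y powr (-(a + g)) * m"
proof -
  have "x powr (-a) *\<^sub>R \<phi>1 - y powr (-a) *\<^sub>R \<phi>0
      = x powr (-a) *\<^sub>R (\<phi>1 - \<phi>0) + (x powr (-a) - y powr (-a)) *\<^sub>R \<phi>0"
    by (simp add: algebra_simps)
  then have "norm (x powr (-a) *\<^sub>R \<phi>1 - y powr (-a) *\<^sub>R \<phi>0)
      \<le> x powr (-a) * norm (\<phi>1 - \<phi>0) + \<bar>x powr (-a) - y powr (-a)\<bar> * norm \<phi>0"
    by (metis (no_types) norm_triangle_ineq norm_scaleR abs_of_nonneg powr_ge_zero)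
  also have "\<dots> \<le> x powr (-a) * norm (\<phi>1 - \<phi>0) + \<bar>x - y\<bar> powr g * min x y powr (-(a + g)) * m"
    using powr_neg_diff_le[of x y a g] assms by (intro add_left_mono mult_mono) auto
  finally show ?thesis .
qed

text \<open>When \<open>s + h\<close> leaves \<open>(0, t)\<close>, the distance from \<open>s\<close> to \<open>0\<close> or to \<open>t\<close> is at most \<open>\<bar>h\<bar>\<close>,
  so the whole term \<open>(t - s)\<^sup>-\<^sup>a \<Phi>(s)\<close> is absorbed into the \<open>\<bar>h\<bar>\<^sup>g\<close> part.\<close>
lemma norm_transl_weighted_diff_powr_le:
  fixes \<Phi> :: "real \<Rightarrow> 'a::real_normed_vector" and s t h a g p m :: real
  assumes s: "0 < s" "s < t" and a: "0 \<le> a" "a \<le> 1" and g: "0 \<le> g" "g \<le> 1"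
    and p: "0 \<le> p" and m: "norm (\<Phi> s) \<le> m"
  shows "norm (transl {0<..<t} h (\<lambda>s. (t - s) powr (-a) *\<^sub>R \<Phi> s) s - (t - s) powr (-a) *\<^sub>R \<Phi> s) powr p
    \<le> 2 powr p * (indicator {0<..<t} (s + h) * (t - (s + h)) powr (-a * p) * norm (\<Phi> (s + h) - \<Phi> s) powr p
      + m powr p * \<bar>h\<bar> powr (g * p) * ((t - s) powr (-((a + g) * p)) + s powr (-((a + g) * p))
          + indicator {0<..<t} (s + h) * (t - (s + h)) powr (-((a + g) * p))))"
    (is "?L \<le> 2 powr p * (?A + m powr p * \<bar>h\<bar> powr (g * p) * ?V)")
proof -
  have m0: "0 \<le> m" using m norm_ge_zero order.trans by blast
  define k where "k = (a + g) * p"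
  show ?thesis
  proof (cases "s + h \<in> {0<..<t}")
    case True
    define x where "x = t - (s + h)"
    define y where "y = t - s"
    have xy: "0 < x" "0 < y" "\<bar>x - y\<bar> = \<bar>h\<bar>" using True s by (auto simp: x_def y_def)
    have "?L = norm (x powr (-a) *\<^sub>R \<Phi> (s + h) - y powr (-a) *\<^sub>R \<Phi> s) powr p"
      using True by (simp add: x_def y_def transl_def)
    also have "\<dots> \<le> (x powr (-a) * norm (\<Phi> (s + h) - \<Phi> s) + \<bar>h\<bar> powr g * min x y powr (-(a + g)) * m) powr p"
      using norm_weight_diff_le[OF xy(1,2) a g m, of "\<Phi> (s + h)"] xy p by (intro powr_mono2) auto
    also have "\<dots> \<le> 2 powr p * ((x powr (-a) * norm (\<Phi> (s + h) - \<Phi> s)) powr p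
        + (\<bar>h\<bar> powr g * min x y powr (-(a + g)) * m) powr p)"
      using p m0 by (intro powr_add_le_two_powr) auto
    also have "(x powr (-a) * norm (\<Phi> (s + h) - \<Phi> s)) powr p = ?A"
      using True by (simp add: powr_mult powr_powr x_def)
    also have "(\<bar>h\<bar> powr g * min x y powr (-(a + g)) * m) powr p
        = m powr p * \<bar>h\<bar> powr (g * p) * min x y powr (-k)"
      using m0 by (simp add: powr_mult powr_powr k_def) (simp add: algebra_simps)
    also have "min x y powr (-k) \<le> ?V"
    proof -
      have "min x y powr (-k) \<le> x powr (-k) + y powr (-k)" by (rule min_powr_le_add)
      also have "\<dots> \<le> ?V" using True by (simp add: x_def y_def k_def)
      finally show ?thesis .
    qed
    finally show ?thesis by (simp add: mult_left_mono)
  next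
    case False
    define y where "y = t - s"
    define \<mu> where "\<mu> = min y s"
    have \<mu>: "0 < \<mu>" "\<mu> \<le> y" "\<mu> \<le> \<bar>h\<bar>" using s False by (auto simp: \<mu>_def y_def)
    have "?L = (y powr (-a) * norm (\<Phi> s)) powr p"
      using False by (simp add: y_def transl_def del: greaterThanLessThan_iff)
    also have "\<dots> \<le> (\<bar>h\<bar> powr g * \<mu> powr (-(a + g)) * m) powr p"
      using powr_neg_le_of_le[OF \<mu> a(1) g(1)] m p by (intro powr_mono2 mult_mono) auto
    also have "\<dots> = m powr p * \<bar>h\<bar> powr (g * p) * \<mu> powr (-k)"
      using m0 by (simp add: powr_mult powr_powr k_def) (simp add: algebra_simps)
    also have "\<dots> \<le> m powr p * \<bar>h\<bar> powr (g * p) * ?V"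
      using min_powr_le_add[of y s "-k"] False by (intro mult_left_mono) (auto simp: \<mu>_def y_def k_def)
    also have "\<dots> \<le> 2 powr p * (?A + m powr p * \<bar>h\<bar> powr (g * p) * ?V)"
    proof -
      have "1 \<le> 2 powr p" using p by (simp add: ge_one_powr_ge_zero)
      then have "1 * (m powr p * \<bar>h\<bar> powr (g * p) * ?V) \<le> 2 powr p * (m powr p * \<bar>h\<bar> powr (g * p) * ?V)"
        by (rule mult_right_mono) simp
      then show ?thesis using False by simp
    qed
    finally show ?thesis .
  qed
qed

lemma nn_integral_singular_weights_le:
  fixes k t h :: real
  assumes "0 \<le> k" "k < 1" "0 < t"
  shows "(\<integral>\<^sup>+ s\<in>{0<..<t}. ennreal ((t - s) powr (-k) + s powr (-k)
      + indicator {0<..<t} (s + h) * (t - (s + h)) powr (-k)) \<partial>lebesgue)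
    \<le> ennreal (3 * (t powr (1 - k) / (1 - k)))"
proof -
  have "(\<integral>\<^sup>+ s\<in>{0<..<t}. ennreal ((t - s) powr (-k) + s powr (-k)
      + indicator {0<..<t} (s + h) * (t - (s + h)) powr (-k)) \<partial>lebesgue)
    \<le> (\<integral>\<^sup>+ s. ennreal ((t - s) powr (-k)) * indicator {0<..<t} s
        + ennreal (s powr (-k)) * indicator {0<..<t} s
        + ennreal ((t - (s + h)) powr (-k)) * indicator {0<..<t} (s + h) \<partial>lebesgue)"
    by (intro nn_integral_mono) (auto simp: indicator_def ennreal_plus)
  also have "\<dots> = (\<integral>\<^sup>+ s. ennreal ((t - s) powr (-k)) * indicator {0<..<t} s \<partial>lebesgue)
      + (\<integral>\<^sup>+ s. ennreal (s powr (-k)) * indicator {0<..<t} s \<partial>lebesgue)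
      + (\<integral>\<^sup>+ s. ennreal ((t - (s + h)) powr (-k)) * indicator {0<..<t} (s + h) \<partial>lebesgue)"
    by (subst nn_integral_add; (intro measurable_completion)?; simp?;
        subst nn_integral_add; simp?; (intro measurable_completion)?; simp)
  also have "\<dots> \<le> ennreal (t powr (1 - k) / (1 - k)) + ennreal (t powr (1 - k) / (1 - k))
      + ennreal (t powr (1 - k) / (1 - k))"
    by (intro add_mono nn_integral_reflected_powr_neg_le nn_integral_powr_neg_le
        nn_integral_shifted_powr_neg_le assms)
  also have "\<dots> = ennreal (3 * (t powr (1 - k) / (1 - k)))"
    using assms by (simp add: ennreal_plus[symmetric] del: ennreal_plus)
  finally show ?thesis .
qed

context
  fixes \<Phi> :: "real \<Rightarrow> 'a::real_normed_vector" and t T0 a g p q r r' m :: real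
  assumes t: "0 < t" "t \<le> T0"
    and a: "0 \<le> a" "a \<le> 1" and g: "0 \<le> g" "g \<le> 1" and p: "1 \<le> p"
    and k: "(a + g) * p < 1"
    and r: "1 < r" "1 < r'" "1/r + 1/r' = 1" "p * r' = q" "a * p * r < 1"
    and m: "0 \<le> m" "AE s in lebesgue. s \<in> {0<..<T0} \<longrightarrow> norm (\<Phi> s) \<le> m"
    and increment_measurable: "\<And>h. (\<lambda>s. norm (\<Phi> (s + h) - \<Phi> s)) \<in> borel_measurable lebesgue"
begin

lemma nn_integral_weighted_increment_le:
  "(\<integral>\<^sup>+ s\<in>{0<..<t}. ennreal (indicator {0<..<t} (s + h) * (t - (s + h)) powr (-a * p)
      * norm (\<Phi> (s + h) - \<Phi> s) powr p) \<partial>lebesgue)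
   \<le> ennreal (2 * (t powr (1 - a * p * r) / (1 - a * p * r)) powr (1/r))
       * enn_powr (Lq_norm q {0<..<T0} (\<lambda>s. transl {0<..<T0} h \<Phi> s - \<Phi> s)) p"
proof -
  define I where "I = {0<..<t}"
  define J where "J = {0<..<T0}"
  define V where "V s = indicator I (s + h) * (t - (s + h)) powr (-a * p)" for s
  define U where "U s = indicator I (s + h) * indicator I s * norm (\<Phi> (s + h) - \<Phi> s) powr p" for s
  define W where "W = t powr (1 - a * p * r) / (1 - a * p * r)"
  have "0 < W" using t r by (simp add: W_def)
  have nonneg: "0 \<le> V s" "0 \<le> U s" for s by (auto simp: V_def U_def)
  have [measurable]: "V \<in> borel_measurable lebesgue"
    unfolding V_def I_def by (intro measurable_completion) measurable
  have [measurable]: "U \<in> borel_measurable lebesgue"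
    unfolding U_def I_def
    by (intro borel_measurable_times measurable_completion powr_real_measurable[OF increment_measurable])
       auto
  have "(\<lambda>s. ennreal (V s powr r))
      = (\<lambda>s. ennreal ((t - (s + h)) powr (-(a * p * r))) * indicator {0<..<t} (s + h))"
    by (auto simp: fun_eq_iff V_def I_def indicator_def powr_powr)
  then have V_int: "(\<integral>\<^sup>+ s. ennreal (V s powr r) \<partial>lebesgue) \<le> ennreal W"
    using nn_integral_shifted_powr_neg_le[of "a * p * r" t h] a p r t by (simp add: W_def)
  have U_int: "(\<integral>\<^sup>+ s. ennreal (U s powr r') \<partial>lebesgue)
      \<le> (\<integral>\<^sup>+ s\<in>J. ennreal (norm (transl J h \<Phi> s - \<Phi> s) powr q) \<partial>lebesgue)"
    using t r(4) by (intro nn_integral_mono) (auto simp: U_def I_def J_def transl_def indicator_def powr_powr)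
  have "(\<integral>\<^sup>+ s\<in>I. ennreal (indicator I (s + h) * (t - (s + h)) powr (-a * p)
      * norm (\<Phi> (s + h) - \<Phi> s) powr p) \<partial>lebesgue) = (\<integral>\<^sup>+ s. ennreal (V s * U s) \<partial>lebesgue)"
    by (intro nn_integral_cong) (simp add: V_def U_def split: split_indicator)
  also have "\<dots> \<le> ennreal (2 * W powr (1/r)) * enn_powr (\<integral>\<^sup>+ s. ennreal (U s powr r') \<partial>lebesgue) (1/r')"
    using nonneg r \<open>0 < W\<close> V_int by (intro nn_integral_mult_le_Holder) auto
  also have "\<dots> \<le> ennreal (2 * W powr (1/r))
      * enn_powr (\<integral>\<^sup>+ s\<in>J. ennreal (norm (transl J h \<Phi> s - \<Phi> s) powr q) \<partial>lebesgue) (1/r')"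
    using U_int r by (intro mult_left_mono enn_powr_mono) auto
  also have "enn_powr (\<integral>\<^sup>+ s\<in>J. ennreal (norm (transl J h \<Phi> s - \<Phi> s) powr q) \<partial>lebesgue) (1/r')
      = enn_powr (Lq_norm q J (\<lambda>s. transl J h \<Phi> s - \<Phi> s)) p"
    using r p by (auto simp: Lq_norm_def enn_powr_powr simp flip: r(4))
  finally show ?thesis by (simp only: I_def J_def W_def)
qed

lemma nn_integral_transl_weighted_diff_le:
  "(\<integral>\<^sup>+ s\<in>{0<..<t}. ennreal (norm (transl {0<..<t} h (\<lambda>s. (t - s) powr (-a) *\<^sub>R \<Phi> s) s
      - (t - s) powr (-a) *\<^sub>R \<Phi> s) powr p) \<partial>lebesgue)
   \<le> ennreal (2 powr p * (2 * (t powr (1 - a * p * r) / (1 - a * p * r)) powr (1/r)))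
       * enn_powr (Lq_norm q {0<..<T0} (\<lambda>s. transl {0<..<T0} h \<Phi> s - \<Phi> s)) p
     + ennreal (2 powr p * m powr p * \<bar>h\<bar> powr (g * p) * (3 * (t powr (1 - (a + g) * p) / (1 - (a + g) * p))))"
proof -
  define I where "I = {0<..<t}"
  define k where "k = (a + g) * p"
  define c where "c = m powr p * \<bar>h\<bar> powr (g * p)"
  define A where "A s = indicator I (s + h) * (t - (s + h)) powr (-a * p) * norm (\<Phi> (s + h) - \<Phi> s) powr p" for s
  define V where "V s = (t - s) powr (-k) + s powr (-k) + indicator I (s + h) * (t - (s + h)) powr (-k)" for s
  have k0: "0 \<le> k" "k < 1" using a g p k by (auto simp: k_def)
  have nonneg: "0 \<le> A s" "0 \<le> V s" "0 \<le> c" for s by (auto simp: A_def V_def c_def)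
  have [measurable]: "I \<in> sets lebesgue" by (simp add: I_def)
  have [measurable]: "A \<in> borel_measurable lebesgue"
    unfolding A_def I_def
    by (intro borel_measurable_times measurable_completion powr_real_measurable[OF increment_measurable])
       auto
  have [measurable]: "V \<in> borel_measurable lebesgue"
    unfolding V_def I_def by (intro measurable_completion) measurable
  have pointwise: "AE s in lebesgue. ennreal (norm (transl I h (\<lambda>s. (t - s) powr (-a) *\<^sub>R \<Phi> s) s
      - (t - s) powr (-a) *\<^sub>R \<Phi> s) powr p) * indicator I s
    \<le> ennreal (2 powr p) * (ennreal (A s) * indicator I s + ennreal c * (ennreal (V s) * indicator I s))"
    using m(2)
  proof eventually_elim
    case (elim s)
    show ?case
    proof (cases "s \<in> I")
      case True
      then have "0 < s" "s < t" "norm (\<Phi> s) \<le> m" using elim t by (auto simp: I_def)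
      from norm_transl_weighted_diff_powr_le[of s t a g p \<Phi> m h, OF this(1,2) a g _ this(3)]
      have "norm (transl I h (\<lambda>s. (t - s) powr (-a) *\<^sub>R \<Phi> s) s - (t - s) powr (-a) *\<^sub>R \<Phi> s) powr p
          \<le> 2 powr p * (A s + c * V s)"
        unfolding A_def V_def c_def k_def I_def using p by simp
      moreover have "ennreal (2 powr p) * (ennreal (A s) * indicator I s + ennreal c * (ennreal (V s) * indicator I s))
          = ennreal (2 powr p * (A s + c * V s))"
        using True nonneg by (simp add: ennreal_mult ennreal_plus)
      ultimately show ?thesis using True by (simp add: ennreal_leI)
    qed simp
  qed
  have "(\<integral>\<^sup>+ s\<in>I. ennreal (norm (transl I h (\<lambda>s. (t - s) powr (-a) *\<^sub>R \<Phi> s) s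
      - (t - s) powr (-a) *\<^sub>R \<Phi> s) powr p) \<partial>lebesgue)
    \<le> ennreal (2 powr p) * ((\<integral>\<^sup>+ s\<in>I. ennreal (A s) \<partial>lebesgue) + ennreal c * (\<integral>\<^sup>+ s\<in>I. ennreal (V s) \<partial>lebesgue))"
    using nn_integral_mono_AE[OF pointwise] by (simp add: nn_integral_cmult nn_integral_add)
  also have "\<dots> \<le> ennreal (2 powr p) * (ennreal (2 * (t powr (1 - a * p * r) / (1 - a * p * r)) powr (1/r))
        * enn_powr (Lq_norm q {0<..<T0} (\<lambda>s. transl {0<..<T0} h \<Phi> s - \<Phi> s)) p
      + ennreal c * ennreal (3 * (t powr (1 - k) / (1 - k))))"
    using nn_integral_weighted_increment_le[of h] nn_integral_singular_weights_le[OF k0 t(1), of h]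
    by (intro mult_left_mono add_mono) (auto simp: A_def V_def I_def)
  also have "\<dots> = ennreal (2 powr p * (2 * (t powr (1 - a * p * r) / (1 - a * p * r)) powr (1/r)))
        * enn_powr (Lq_norm q {0<..<T0} (\<lambda>s. transl {0<..<T0} h \<Phi> s - \<Phi> s)) p
      + ennreal (2 powr p * m powr p * \<bar>h\<bar> powr (g * p) * (3 * (t powr (1 - k) / (1 - k))))"
    using nonneg k0 t
    by (simp add: distrib_left c_def ennreal_mult[symmetric] mult.assoc del: ennreal_mult)
       (simp add: ennreal_mult mult.assoc)
  finally show ?thesis by (simp only: I_def k_def)
qed

lemma Lq_norm_weighted_le:
  "Lq_norm p {0<..<t} (\<lambda>s. (t - s) powr (-a) *\<^sub>R \<Phi> s)
    \<le> ennreal (m * (t powr (1 - a * p) / (1 - a * p)) powr (1/p))"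
proof -
  have "a * p * 1 \<le> a * p * r" using a p r by (intro mult_left_mono) auto
  then have ap: "a * p < 1" using r by simp
  have "(\<integral>\<^sup>+ s\<in>{0<..<t}. ennreal (norm ((t - s) powr (-a) *\<^sub>R \<Phi> s) powr p) \<partial>lebesgue)
      \<le> (\<integral>\<^sup>+ s. ennreal (m powr p) * (ennreal ((t - s) powr (-(a * p))) * indicator {0<..<t} s) \<partial>lebesgue)"
  proof (rule nn_integral_mono_AE)
    show "AE s in lebesgue. ennreal (norm ((t - s) powr (-a) *\<^sub>R \<Phi> s) powr p) * indicator {0<..<t} s
        \<le> ennreal (m powr p) * (ennreal ((t - s) powr (-(a * p))) * indicator {0<..<t} s)"
      using m(2)
    proof eventually_elim
      case (elim s)
      show ?case
      proof (cases "s \<in> {0<..<t}")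
        case True
        then have "norm (\<Phi> s) \<le> m" using elim t by auto
        then have "norm ((t - s) powr (-a) *\<^sub>R \<Phi> s) powr p \<le> ((t - s) powr (-a) * m) powr p"
          using p by (auto intro!: powr_mono2 mult_left_mono)
        also have "\<dots> = m powr p * (t - s) powr (-(a * p))"
          using m by (simp add: powr_mult powr_powr mult.commute)
        finally show ?thesis using True
          by (simp add: ennreal_mult[symmetric] ennreal_leI del: ennreal_mult)
      qed simp
    qed
  qed
  also have "\<dots> = ennreal (m powr p) * (\<integral>\<^sup>+ s. ennreal ((t - s) powr (-(a * p))) * indicator {0<..<t} s \<partial>lebesgue)"
    by (rule nn_integral_cmult) (intro measurable_completion, simp)
  also have "\<dots> \<le> ennreal (m powr p) * ennreal (t powr (1 - a * p) / (1 - a * p))"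
    using ap a p t by (intro mult_left_mono nn_integral_reflected_powr_neg_le) auto
  also have "\<dots> = ennreal (m powr p * (t powr (1 - a * p) / (1 - a * p)))"
    using ap by (simp add: ennreal_mult[symmetric] del: ennreal_mult)
  finally have "Lq_norm p {0<..<t} (\<lambda>s. (t - s) powr (-a) *\<^sub>R \<Phi> s)
      \<le> enn_powr (ennreal (m powr p * (t powr (1 - a * p) / (1 - a * p)))) (1/p)"
    unfolding Lq_norm_def using p by (intro enn_powr_mono) auto
  also have "\<dots> = ennreal (m * (t powr (1 - a * p) / (1 - a * p)) powr (1/p))"
  proof -
    define Q where "Q = t powr (1 - a * p) / (1 - a * p)"
    have "0 \<le> Q" using ap by (simp add: Q_def)
    then have "enn_powr (ennreal (m powr p * Q)) (1/p) = ennreal (m * Q powr (1/p))"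
      using m p by (simp add: enn_powr_ennreal powr_mult powr_powr)
    then show ?thesis by (simp only: Q_def)
  qed
  finally show ?thesis .
qed

lemma Lq_modulus_weighted_le:
  assumes "0 < \<rho>"
  shows "enn_powr (Lq_modulus p {0<..<t} (\<lambda>s. (t - s) powr (-a) *\<^sub>R \<Phi> s) \<rho>) p
    \<le> ennreal (2 powr p * (2 * (t powr (1 - a * p * r) / (1 - a * p * r)) powr (1/r)))
        * enn_powr (Lq_modulus q {0<..<T0} \<Phi> \<rho>) p
      + ennreal (2 powr p * m powr p * (3 * (t powr (1 - (a + g) * p) / (1 - (a + g) * p))) * \<rho> powr (g * p))"
    (is "_ \<le> ennreal ?A * _ + ennreal (?B * _)")
proof -
  define Z where "Z = ennreal ?A * enn_powr (Lq_modulus q {0<..<T0} \<Phi> \<rho>) p + ennreal (?B * \<rho> powr (g * p))"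
  have "Lq_norm p {0<..<t} (\<lambda>s. transl {0<..<t} h (\<lambda>s. (t - s) powr (-a) *\<^sub>R \<Phi> s) s
      - (t - s) powr (-a) *\<^sub>R \<Phi> s) \<le> enn_powr Z (1/p)" if h: "\<bar>h\<bar> < \<rho>" for h
  proof -
    have "(\<integral>\<^sup>+ s\<in>{0<..<t}. ennreal (norm (transl {0<..<t} h (\<lambda>s. (t - s) powr (-a) *\<^sub>R \<Phi> s) s
        - (t - s) powr (-a) *\<^sub>R \<Phi> s) powr p) \<partial>lebesgue)
      \<le> ennreal ?A * enn_powr (Lq_norm q {0<..<T0} (\<lambda>s. transl {0<..<T0} h \<Phi> s - \<Phi> s)) p
        + ennreal (?B * \<bar>h\<bar> powr (g * p))"
      using nn_integral_transl_weighted_diff_le[of h] by (simp only: mult_ac)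
    also have "\<dots> \<le> Z"
      unfolding Z_def
    proof (rule add_mono)
      show "ennreal ?A * enn_powr (Lq_norm q {0<..<T0} (\<lambda>s. transl {0<..<T0} h \<Phi> s - \<Phi> s)) p
          \<le> ennreal ?A * enn_powr (Lq_modulus q {0<..<T0} \<Phi> \<rho>) p"
        unfolding Lq_modulus_def using h p by (intro mult_left_mono enn_powr_mono SUP_upper) auto
      have "0 \<le> ?B" using k by simp
      then show "ennreal (?B * \<bar>h\<bar> powr (g * p)) \<le> ennreal (?B * \<rho> powr (g * p))"
        using h g p by (intro ennreal_leI mult_left_mono powr_mono2) auto
    qed
    finally show ?thesis unfolding Lq_norm_def using p by (intro enn_powr_mono) auto
  qed
  then have "Lq_modulus p {0<..<t} (\<lambda>s. (t - s) powr (-a) *\<^sub>R \<Phi> s) \<rho> \<le> enn_powr Z (1/p)"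
    unfolding Lq_modulus_def by (intro SUP_least) auto
  then have "enn_powr (Lq_modulus p {0<..<t} (\<lambda>s. (t - s) powr (-a) *\<^sub>R \<Phi> s) \<rho>) p
      \<le> enn_powr (enn_powr Z (1/p)) p"
    using p by (intro enn_powr_mono) auto
  also have "\<dots> = Z" using p by (simp add: enn_powr_powr)
  finally show ?thesis unfolding Z_def .
qed

lemma besov_norm_weighted_le:
  assumes "1/p - 1/2 < g"
  shows "besov_norm p p (1/p - 1/2) {0<..<t} (\<lambda>s. (t - s) powr (-a) *\<^sub>R \<Phi> s)
    \<le> ennreal (m * (t powr (1 - a * p) / (1 - a * p)) powr (1/p))
      + ennreal ((2 powr p * (2 * (t powr (1 - a * p * r) / (1 - a * p * r)) powr (1/r))) powr (1/p))
          * besov_seminorm q p (1/p - 1/2) {0<..<T0} \<Phi>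
      + ennreal ((2 powr p * m powr p * (3 * (t powr (1 - (a + g) * p) / (1 - (a + g) * p)))
          / (g * p - (1/p - 1/2) * p)) powr (1/p))"
proof -
  have "(1/p - 1/2) * p < g * p" using assms p by (intro mult_strict_right_mono) auto
  moreover have "0 \<le> 2 powr p * m powr p * (3 * (t powr (1 - (a + g) * p) / (1 - (a + g) * p)))"
    using k by simp
  ultimately show ?thesis
    unfolding besov_norm_eq add.assoc using p
    by (intro add_mono Lq_norm_weighted_le besov_seminorm_le_of_Lq_modulus_le[where \<gamma>="g * p"]
        Lq_modulus_weighted_le) auto
qed

lemma besov_norm_weighted_le_scaled:
  assumes "1/p - 1/2 < g"
  shows "besov_norm p p (1/p - 1/2) {0<..<t} (\<lambda>s. (t - s) powr (-a) *\<^sub>R \<Phi> s)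
    \<le> ennreal (m * (1 / (1 - a * p) * t powr (1 - a * p)) powr (1/p))
      + ennreal ((2 powr p * 2 * (1 / (1 - a * p * r)) powr (1/r) * t powr ((1 - a * p * r) / r)) powr (1/p))
          * besov_seminorm q p (1/p - 1/2) {0<..<T0} \<Phi>
      + ennreal (m * (2 powr p * 3 / ((1 - (a + g) * p) * (g * p - (1/p - 1/2) * p))
          * t powr (1 - (a + g) * p)) powr (1/p))"
proof -
  define y where "y = 1 - a * p * r"
  define k' where "k' = 1 - (a + g) * p"
  define b where "b = g * p - (1/p - 1/2) * p"
  have "0 < y" "0 < k'" using r k by (simp_all add: y_def k'_def)
  have "0 < b" using assms p by (simp add: b_def mult_strict_right_mono flip: left_diff_distrib)
  have eq1: "t powr (1 - a * p) / (1 - a * p) = 1 / (1 - a * p) * t powr (1 - a * p)" by simp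
  have eq2: "2 powr p * (2 * (t powr y / y) powr (1/r)) = 2 powr p * 2 * (1 / y) powr (1/r) * t powr (y / r)"
    using \<open>0 < y\<close> t by (simp add: powr_divide powr_powr)
  have eq3: "(2 powr p * m powr p * (3 * (t powr k' / k')) / b) powr (1/p)
      = m * (2 powr p * 3 / (k' * b) * t powr k') powr (1/p)"
  proof -
    define Y where "Y = 2 powr p * 3 / (k' * b) * t powr k'"
    have "0 \<le> Y" using \<open>0 < k'\<close> \<open>0 < b\<close> by (simp add: Y_def)
    have "2 powr p * m powr p * (3 * (t powr k' / k')) / b = m powr p * Y" by (simp add: Y_def)
    also have "(m powr p * Y) powr (1/p) = m * Y powr (1/p)"
      using m(1) p \<open>0 \<le> Y\<close> by (simp add: powr_mult powr_powr)
    finally show ?thesis by (simp only: Y_def)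
  qed
  show ?thesis
    unfolding y_def[symmetric] k'_def[symmetric] b_def[symmetric]
    using besov_norm_weighted_le[OF assms, folded y_def k'_def b_def] unfolding eq1 eq2 eq3 .
qed
end

section \<open>Uniformity in time\<close>

lemma scaled_powr_le_split:
  fixes c d e t T0 T \<epsilon> :: real
  assumes "0 \<le> c" "0 < d" "0 < t" "t \<le> T0" "T0 \<le> T" "0 < \<epsilon>" "\<epsilon> \<le> e * d"
  shows "(c * t powr e) powr d \<le> c powr d * T powr (e * d - \<epsilon>) * T0 powr \<epsilon>"
proof -
  have "(c * t powr e) powr d = c powr d * t powr (e * d)" using assms by (simp add: powr_mult powr_powr)
  also have "t powr (e * d) \<le> T0 powr (e * d)" using assms by (intro powr_mono2) auto
  also have "T0 powr (e * d) = T0 powr (e * d - \<epsilon>) * T0 powr \<epsilon>"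
    using assms by (simp add: powr_add[symmetric])
  also have "T0 powr (e * d - \<epsilon>) \<le> T powr (e * d - \<epsilon>)" using assms by (intro powr_mono2) auto
  finally show ?thesis using assms by (simp add: mult_left_mono mult.assoc)
qed

lemma ennreal_coefficients_le:
  fixes m X1 X2 X3 K :: real and E B :: ennreal
  assumes "0 \<le> m" "0 \<le> X1" "0 \<le> X2" "0 \<le> X3" "X1 + X3 \<le> K" "X2 \<le> K" "E \<le> B"
  shows "ennreal (m * X1) + ennreal X2 * E + ennreal (m * X3) \<le> ennreal K * (ennreal m + B)"
proof -
  have "ennreal (m * X1) + ennreal X2 * E + ennreal (m * X3) = ennreal (m * (X1 + X3)) + ennreal X2 * E"
    using assms by (simp add: distrib_left ennreal_plus[symmetric] add_ac del: ennreal_plus)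
  also have "\<dots> \<le> ennreal (m * K) + ennreal K * B"
    using assms by (intro add_mono ennreal_leI mult_left_mono mult_mono) auto
  also have "\<dots> = ennreal K * (ennreal m + B)"
    using assms by (simp add: distrib_left ennreal_mult mult.commute)
  finally show ?thesis .
qed

lemma besov_norm_weighted_le_powr:
  fixes \<Phi> :: "real \<Rightarrow> 'a::real_normed_vector" and a g p q r r' T :: real
  assumes a: "0 \<le> a" "a \<le> 1" and g: "0 \<le> g" "g \<le> 1" and p: "1 \<le> p"
    and k: "(a + g) * p < 1"
    and r: "1 < r" "1 < r'" "1/r + 1/r' = 1" "p * r' = q" "a * p * r < 1"
    and gs: "1/p - 1/2 < g"
    and increment_measurable: "\<And>h. (\<lambda>s. norm (\<Phi> (s + h) - \<Phi> s)) \<in> borel_measurable lebesgue"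
  shows "\<exists>\<epsilon> > 0. \<exists>C > 0. \<forall>T0 t m. 0 < t \<longrightarrow> t \<le> T0 \<longrightarrow> T0 \<le> T \<longrightarrow> 0 \<le> m \<longrightarrow>
    (AE s in lebesgue. s \<in> {0<..<T0} \<longrightarrow> norm (\<Phi> s) \<le> m) \<longrightarrow>
    besov_norm p p (1/p - 1/2) {0<..<t} (\<lambda>s. (t - s) powr (-a) *\<^sub>R \<Phi> s)
      \<le> ennreal (C * T0 powr \<epsilon>) * (ennreal m + besov_seminorm q p (1/p - 1/2) {0<..<T0} \<Phi>)"
proof -
  define e1 e2 e3 where "e1 = 1 - a * p" and "e2 = (1 - a * p * r) / r" and "e3 = 1 - (a + g) * p"
  define c1 c2 c3 where "c1 = 1 / (1 - a * p)" and "c2 = 2 powr p * 2 * (1 / (1 - a * p * r)) powr (1/r)"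
    and "c3 = 2 powr p * 3 / ((1 - (a + g) * p) * (g * p - (1/p - 1/2) * p))"
  define \<epsilon> where "\<epsilon> = min e2 e3 / p"
  define K where "K c e = c powr (1/p) * T powr (e / p - \<epsilon>)" for c e
  define C where "C = K c1 e1 + K c2 e2 + K c3 e3 + 1"
  have "a * p * 1 \<le> a * p * r" using a p r by (intro mult_left_mono) auto
  then have "a * p < 1" using r by simp
  have "(1/p - 1/2) * p < g * p" using gs p by (intro mult_strict_right_mono) auto
  then have c: "0 \<le> c1" "0 \<le> c2" "0 \<le> c3"
    using \<open>a * p < 1\<close> r k by (simp_all add: c1_def c2_def c3_def)
  have "e2 \<le> e1" using r a p by (simp add: e1_def e2_def field_simps mult_le_cancel_left1)
  then have exponents: "\<epsilon> \<le> e1 / p" "\<epsilon> \<le> e2 / p" "\<epsilon> \<le> e3 / p"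
    using p by (auto simp: \<epsilon>_def divide_right_mono)
  have "0 < \<epsilon>" using r k p by (simp add: \<epsilon>_def e2_def e3_def)
  have "0 < C" unfolding C_def K_def by (intro add_nonneg_pos add_nonneg_nonneg mult_nonneg_nonneg) auto
  show ?thesis
  proof (rule exI[of _ \<epsilon>], rule conjI[OF \<open>0 < \<epsilon>\<close>], rule exI[of _ C],
      rule conjI[OF \<open>0 < C\<close>], intro allI impI)
    fix T0 t m
    assume t: "0 < t" "t \<le> T0" and T0: "T0 \<le> T" and m: "0 \<le> m"
      "AE s in lebesgue. s \<in> {0<..<T0} \<longrightarrow> norm (\<Phi> s) \<le> m"
    have split: "(c * t powr e) powr (1/p) \<le> K c e * T0 powr \<epsilon>" if "0 \<le> c" "\<epsilon> \<le> e / p" for c e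
      using scaled_powr_le_split[of c "1/p" t T0 T \<epsilon> e] that t T0 p \<open>0 < \<epsilon>\<close> by (simp add: K_def)
    have "besov_norm p p (1/p - 1/2) {0<..<t} (\<lambda>s. (t - s) powr (-a) *\<^sub>R \<Phi> s)
      \<le> ennreal (m * (c1 * t powr e1) powr (1/p)) + ennreal ((c2 * t powr e2) powr (1/p))
          * besov_seminorm q p (1/p - 1/2) {0<..<T0} \<Phi> + ennreal (m * (c3 * t powr e3) powr (1/p))"
      using besov_norm_weighted_le_scaled[OF t a g p k r m increment_measurable gs]
      by (simp only: c1_def c2_def c3_def e1_def e2_def e3_def)
    also have "\<dots> \<le> ennreal (C * T0 powr \<epsilon>) * (ennreal m + besov_seminorm q p (1/p - 1/2) {0<..<T0} \<Phi>)"
    proof (rule ennreal_coefficients_le)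
      have "C * T0 powr \<epsilon> = K c1 e1 * T0 powr \<epsilon> + K c2 e2 * T0 powr \<epsilon> + K c3 e3 * T0 powr \<epsilon> + T0 powr \<epsilon>"
        by (simp add: C_def algebra_simps)
      moreover have "0 \<le> K c e * T0 powr \<epsilon>" for c e by (simp add: K_def)
      ultimately show "(c1 * t powr e1) powr (1/p) + (c3 * t powr e3) powr (1/p) \<le> C * T0 powr \<epsilon>"
        and "(c2 * t powr e2) powr (1/p) \<le> C * T0 powr \<epsilon>"
        using split[OF c(1) exponents(1)] split[OF c(2) exponents(2)] split[OF c(3) exponents(3)]
        by (smt (verit) powr_ge_zero)+
    qed (use m(1) in auto)
    finally show "besov_norm p p (1/p - 1/2) {0<..<t} (\<lambda>s. (t - s) powr (-a) *\<^sub>R \<Phi> s)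
      \<le> ennreal (C * T0 powr \<epsilon>) * (ennreal m + besov_seminorm q p (1/p - 1/2) {0<..<T0} \<Phi>)" .
  qed
qed

lemma sup_besov_norm_weighted_le:
  fixes \<Phi> :: "real \<Rightarrow> 'a::real_normed_vector" and a g p q r r' T :: real
  assumes a: "0 \<le> a" "a \<le> 1" and g: "0 \<le> g" "g \<le> 1" and p: "1 \<le> p"
    and k: "(a + g) * p < 1"
    and r: "1 < r" "1 < r'" "1/r + 1/r' = 1" "p * r' = q" "a * p * r < 1"
    and gs: "1/p - 1/2 < g"
    and increment_measurable: "\<And>h. (\<lambda>s. norm (\<Phi> (s + h) - \<Phi> s)) \<in> borel_measurable lebesgue"
  shows "\<exists>\<epsilon>0 > 0. \<exists>C \<ge> 0. \<forall>T0 \<in> {0..T}.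
    (SUP t\<in>{0..T0}. besov_norm p p (1/p - 1/2) {0<..<t} (\<lambda>s. (t - s) powr (-a) *\<^sub>R \<Phi> s))
      \<le> ennreal (C * T0 powr \<epsilon>0) * (Linf_norm {0<..<T0} \<Phi> + besov_norm q p (1/p - 1/2) {0<..<T0} \<Phi>)"
proof -
  obtain \<epsilon> C where "0 < \<epsilon>" "0 < C" and bound: "\<And>T0 t m. 0 < t \<Longrightarrow> t \<le> T0 \<Longrightarrow> T0 \<le> T \<Longrightarrow> 0 \<le> m \<Longrightarrow>
      (AE s in lebesgue. s \<in> {0<..<T0} \<longrightarrow> norm (\<Phi> s) \<le> m) \<Longrightarrow>
      besov_norm p p (1/p - 1/2) {0<..<t} (\<lambda>s. (t - s) powr (-a) *\<^sub>R \<Phi> s)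
        \<le> ennreal (C * T0 powr \<epsilon>) * (ennreal m + besov_seminorm q p (1/p - 1/2) {0<..<T0} \<Phi>)"
    using besov_norm_weighted_le_powr[OF a g p k r gs increment_measurable, of T] by blast
  have "besov_norm p p (1/p - 1/2) {0<..<t} (\<lambda>s. (t - s) powr (-a) *\<^sub>R \<Phi> s)
      \<le> ennreal (C * T0 powr \<epsilon>) * (Linf_norm {0<..<T0} \<Phi> + besov_norm q p (1/p - 1/2) {0<..<T0} \<Phi>)"
    if T0: "T0 \<le> T" and t: "0 \<le> t" "t \<le> T0" for T0 t
  proof (cases "t = 0 \<or> Linf_norm {0<..<T0} \<Phi> = top")
    case True
    then show ?thesis
      using \<open>0 < C\<close> t by (auto simp: besov_norm_empty ennreal_mult_top)
  next
    case False
    define m where "m = enn2real (Linf_norm {0<..<T0} \<Phi>)"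
    have m: "Linf_norm {0<..<T0} \<Phi> = ennreal m" "0 \<le> m"
      using False by (auto simp: m_def top.not_eq_extremum intro: ennreal_enn2real[symmetric])
    have "AE s in lebesgue. s \<in> {0<..<T0} \<longrightarrow> norm (\<Phi> s) \<le> m"
      unfolding m_def by (rule AE_norm_le_Linf_norm) (use False in auto)
    then have "besov_norm p p (1/p - 1/2) {0<..<t} (\<lambda>s. (t - s) powr (-a) *\<^sub>R \<Phi> s)
        \<le> ennreal (C * T0 powr \<epsilon>) * (ennreal m + besov_seminorm q p (1/p - 1/2) {0<..<T0} \<Phi>)"
      using False t T0 m(2) by (intro bound) auto
    also have "\<dots> \<le> ennreal (C * T0 powr \<epsilon>) * (Linf_norm {0<..<T0} \<Phi> + besov_norm q p (1/p - 1/2) {0<..<T0} \<Phi>)"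
      unfolding m(1) by (intro mult_left_mono add_left_mono besov_seminorm_le_besov_norm) auto
    finally show ?thesis .
  qed
  then have "\<forall>T0 \<in> {0..T}.
    (SUP t\<in>{0..T0}. besov_norm p p (1/p - 1/2) {0<..<t} (\<lambda>s. (t - s) powr (-a) *\<^sub>R \<Phi> s))
      \<le> ennreal (C * T0 powr \<epsilon>) * (Linf_norm {0<..<T0} \<Phi> + besov_norm q p (1/p - 1/2) {0<..<T0} \<Phi>)"
    by (auto intro!: SUP_least)
  then show ?thesis using \<open>0 < \<epsilon>\<close> \<open>0 < C\<close> less_imp_le by blast
qed

text \<open>\<open>g\<close> is the midpoint of \<open>(1/\<tau> - 1/2, 1/\<tau> - \<alpha>)\<close> and \<open>r'\<close> the Hoelder exponent
  \<open>q/\<tau>\<close>.\<close>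
lemma admissible_exponents:
  fixes \<tau> \<alpha> q :: real
  assumes tau: "1 \<le> \<tau>" "\<tau> < 2" and alpha: "0 \<le> \<alpha>" "\<alpha> < 1/2"
    and q: "2 < q" and qa: "1 / q < 1 / \<tau> - \<alpha>"
  obtains g r r' where "0 \<le> g" "g \<le> 1" "(\<alpha> + g) * \<tau> < 1"
    "1 < r" "1 < r'" "1/r + 1/r' = 1" "\<tau> * r' = q" "\<alpha> * \<tau> * r < 1"
    "1/\<tau> - 1/2 < g"
proof
  define g where "g = 1/\<tau> - 1/4 - \<alpha>/2"
  have "1/2 < 1/\<tau>" "1/\<tau> \<le> 1" using tau by (auto simp: field_simps)
  then show "0 \<le> g" "g \<le> 1" "1/\<tau> - 1/2 < g" using alpha by (auto simp: g_def)
  have "(\<alpha> + g) * \<tau> = 1 + \<tau> * (\<alpha>/2 - 1/4)" using tau by (simp add: g_def field_simps)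
  moreover have "\<tau> * (\<alpha>/2 - 1/4) < 0" using tau alpha by (intro mult_pos_neg) auto
  ultimately show "(\<alpha> + g) * \<tau> < 1" by simp
  show "1 < q / (q - \<tau>)" "1 < q / \<tau>" "1 / (q / (q - \<tau>)) + 1 / (q / \<tau>) = 1" "\<tau> * (q / \<tau>) = q"
    using q tau by (auto simp: field_simps)
  have "\<alpha> * (\<tau> * q) < (1/\<tau> - 1/q) * (\<tau> * q)"
    using qa tau q by (intro mult_strict_right_mono) auto
  also have "\<dots> = q - \<tau>" using tau q by (simp add: field_simps)
  finally show "\<alpha> * \<tau> * (q / (q - \<tau>)) < 1" using q tau by (simp add: field_simps)
qed

theorem lemmaA3:
  fixes \<Phi> :: "real \<Rightarrow> 'a::banach"
    and \<tau> \<alpha> q T :: real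
  assumes T: "T > 0"
    and type: "rademacher_type TYPE('a) \<tau>" and tau: "1 \<le> \<tau>" "\<tau> < 2"
    and alpha: "0 \<le> \<alpha>" "\<alpha> < 1/2"
    and q: "2 < q"
    and qa: "1 / q < 1 / \<tau> - \<alpha>"
    and meas: "strongly_measurable_on {0<..<T} \<Phi>"
    and besov: "besov_norm q \<tau> (1/\<tau> - 1/2) {0<..<T} \<Phi> < \<infinity>"
    and linf: "Linf_norm {0<..<T} \<Phi> < \<infinity>"
  shows "\<exists>\<epsilon>0 > 0. \<exists>C \<ge> 0. \<forall>T0 \<in> {0..T}.
     (SUP t\<in>{0..T0}. besov_norm \<tau> \<tau> (1/\<tau> - 1/2) {0<..<t} (\<lambda>s. (t - s) powr (- \<alpha>) *\<^sub>R \<Phi> s))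
       \<le> ennreal (C * T0 powr \<epsilon>0) *
         (Linf_norm {0<..<T0} \<Phi> + besov_norm q \<tau> (1/\<tau> - 1/2) {0<..<T0} \<Phi>)"
proof -
  obtain g r r' where exponents: "0 \<le> g" "g \<le> 1" "(\<alpha> + g) * \<tau> < 1"
    "1 < r" "1 < r'" "1/r + 1/r' = 1" "\<tau> * r' = q" "\<alpha> * \<tau> * r < 1" "1/\<tau> - 1/2 < g"
    using admissible_exponents[OF tau alpha q qa] .
  obtain \<Psi> where \<Psi>: "AE s in lebesgue. s \<in> {0<..<T} \<longrightarrow> \<Psi> s = \<Phi> s"
    and \<Psi>_increments: "\<And>h. (\<lambda>s. norm (\<Psi> (s + h) - \<Psi> s)) \<in> borel_measurable lebesgue"
    using strongly_measurable_on_representative[OF meas] by auto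
  have same_on: "AE s in lebesgue. s \<in> {0<..<t} \<longrightarrow> f s (\<Psi> s) = f s (\<Phi> s)" if "t \<le> T" for t f
    using \<Psi> by eventually_elim (use that in auto)
  obtain \<epsilon>0 C where "\<epsilon>0 > 0" "C \<ge> 0" and bound: "\<forall>T0 \<in> {0..T}.
    (SUP t\<in>{0..T0}. besov_norm \<tau> \<tau> (1/\<tau> - 1/2) {0<..<t} (\<lambda>s. (t - s) powr (-\<alpha>) *\<^sub>R \<Psi> s))
      \<le> ennreal (C * T0 powr \<epsilon>0) * (Linf_norm {0<..<T0} \<Psi> + besov_norm q \<tau> (1/\<tau> - 1/2) {0<..<T0} \<Psi>)"
    using sup_besov_norm_weighted_le[where T=T, OF alpha(1) _ exponents(1,2) tau(1) exponents(3-9) \<Psi>_increments]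
      alpha by auto
  have "besov_norm \<tau> \<tau> (1/\<tau> - 1/2) {0<..<t} (\<lambda>s. (t - s) powr (-\<alpha>) *\<^sub>R \<Psi> s)
      = besov_norm \<tau> \<tau> (1/\<tau> - 1/2) {0<..<t} (\<lambda>s. (t - s) powr (-\<alpha>) *\<^sub>R \<Phi> s)" if "t \<le> T" for t
    using same_on[OF that, of "\<lambda>s v. (t - s) powr (-\<alpha>) *\<^sub>R v"] by (rule besov_norm_cong_AE)
  moreover have "Linf_norm {0<..<T0} \<Psi> = Linf_norm {0<..<T0} \<Phi>"
    and "besov_norm q \<tau> (1/\<tau> - 1/2) {0<..<T0} \<Psi> = besov_norm q \<tau> (1/\<tau> - 1/2) {0<..<T0} \<Phi>"
    if "T0 \<le> T" for T0
    using same_on[OF that, of "\<lambda>s v. v"] by (auto intro: Linf_norm_cong_AE besov_norm_cong_AE)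
  ultimately show ?thesis
    using \<open>\<epsilon>0 > 0\<close> \<open>C \<ge> 0\<close> bound by (intro exI[of _ \<epsilon>0] conjI exI[of _ C]) auto
qed

end
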